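(* Fix a sequence of matchings and any non-negative load vector at the end of round $t_1$, and consider a token $i$ located at node $u=w_i^{(t_1)}$ at the end of round $t_1$. Then for any $t_2 \geq t_1$ and any node $v$, $\Pr[ w_i^{(t_2)} = v ] = \mathbf{M}_{u,v}^{[t_1+1,t_2]}$, and more generally, for any set $D \subseteq V$, $\Pr[ w_i^{(t_2)} \in D ] = \mathbf{M}_{u,D}^{[t_1+1,t_2]}$.
   Context: $G=(V,E)$ has $n$ nodes; a matching $\mathbf{M}^{(t)}\subseteq E$ is identified with the symmetric matrix with entries $1/2$ on $(u,u),(v,v),(u,v),(v,u)$ for $\{u,v\}\in\mathbf{M}^{(t)}$, $1$ on the diagonal for unmatched nodes, $0$ elsewhere; $\mathbf{M}^{[a,b]}=\prod_{s=a}^b\mathbf{M}^{(s)}$ (identity if $a>b$), and $\mathbf{M}_{u,D}=\sum_{v\in D}\mathbf{M}_{u,v}$. Token-based description of the discrete protocol: tokens are distinguishable; $x^{(t)}_u$ is the number of tokens at $u$ at the end of round $t$ and $w^{(t)}_i$ is the node holding token $i$. If $u,v$ are matched in round $t$, all $x^{(t-1)}_u+x^{(t-1)}_v$ tokens at $u$ and $v$ are put in an urn; with probability $1/2$ node $u$ draws $\lceil (x^{(t-1)}_u+x^{(t-1)}_v)/2\rceil$ tokens uniformly at random without replacement, otherwise it draws $\lfloor (x^{(t-1)}_u+x^{(t-1)}_v)/2\rfloor$ tokens (independently over matched edges and rounds); $v$ receives the remaining tokens. Unmatched nodes keep their tokens. *)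

theory Defs
  imports "HOL-Probability.Probability"
begin

text \<open>Nodes are the elements of a finite type 'n (so V = UNIV); tokens are the
elements of a finite type 'b.  A matching is represented as a set of ordered pairs
(u,v) (the orientation only names which endpoint is called u).\<close>

definition simple_graph :: "'n set set \<Rightarrow> bool" where
  "simple_graph E \<longleftrightarrow> (\<forall>e\<in>E. card e = 2)"

definition is_matching :: "'n set set \<Rightarrow> ('n \<times> 'n) set \<Rightarrow> bool" where
  "is_matching E M \<longleftrightarrow>
     (\<forall>(u,v)\<in>M. u \<noteq> v \<and> {u,v} \<in> E) \<and>
     (\<forall>p\<in>M. \<forall>q\<in>M. p \<noteq> q \<longrightarrow> {fst p, snd p} \<inter> {fst q, snd q} = {})"

definition matched :: "('n \<times> 'n) set \<Rightarrow> 'n \<Rightarrow> bool" where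
  "matched M u \<longleftrightarrow> (\<exists>p\<in>M. u = fst p \<or> u = snd p)"

definition matching_matrix :: "('n::finite \<times> 'n) set \<Rightarrow> real^'n^'n" where
  "matching_matrix M = (\<chi> u v.
     if (u,v) \<in> M \<or> (v,u) \<in> M then 1/2
     else if u = v then (if matched M u then 1/2 else 1) else 0)"

fun mseq :: "(nat \<Rightarrow> ('n::finite \<times> 'n) set) \<Rightarrow> nat \<Rightarrow> nat \<Rightarrow> real^'n^'n" where
  "mseq Ms a 0 = mat 1"
| "mseq Ms a (Suc n) = mseq Ms a n ** matching_matrix (Ms (a + n))"

text \<open>M^[a,b] = prod_{s=a}^b M^(s); identity if a > b.\<close>
definition Mint :: "(nat \<Rightarrow> ('n::finite \<times> 'n) set) \<Rightarrow> nat \<Rightarrow> nat \<Rightarrow> real^'n^'n" where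
  "Mint Ms a b = mseq Ms a (Suc b - a)"

definition Mset :: "real^'n^'n \<Rightarrow> 'n \<Rightarrow> 'n set \<Rightarrow> real" where
  "Mset A u D = (\<Sum>v\<in>D. A $ u $ v)"

text \<open>Random choice for one matched edge (u,v) given token positions w:
  the set of tokens that u receives.\<close>
definition edge_draw :: "('b::finite \<Rightarrow> 'n) \<Rightarrow> 'n \<times> 'n \<Rightarrow> 'b set pmf" where
  "edge_draw w e =
     (let T = {i. w i = fst e \<or> w i = snd e}; n = card T in
      do { up \<leftarrow> bernoulli_pmf (1/2);
           let k = (if up then (n + 1) div 2 else n div 2);
           pmf_of_set {S. S \<subseteq> T \<and> card S = k} })"

definition relocate :: "('n \<times> 'n) set \<Rightarrow> ('b \<Rightarrow> 'n) \<Rightarrow> ('n \<times> 'n \<Rightarrow> 'b set) \<Rightarrow> 'b \<Rightarrow> 'n" where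
  "relocate M w f i =
     (if matched M (w i) then
        (let e = (THE e. e \<in> M \<and> (w i = fst e \<or> w i = snd e)) in
           if i \<in> f e then fst e else snd e)
      else w i)"

definition round_step :: "('n \<times> 'n) set \<Rightarrow> ('b::finite \<Rightarrow> 'n) \<Rightarrow> ('b \<Rightarrow> 'n) pmf" where
  "round_step M w = map_pmf (relocate M w) (Pi_pmf M {} (edge_draw w))"

text \<open>run Ms t n w: distribution of the token positions at the end of round
  t+n, given positions w at the end of round t (rounds t+1..t+n performed).\<close>
fun run :: "(nat \<Rightarrow> ('n \<times> 'n) set) \<Rightarrow> nat \<Rightarrow> nat \<Rightarrow> ('b::finite \<Rightarrow> 'n) \<Rightarrow> ('b \<Rightarrow> 'n) pmf" where
  "run Ms t 0 w = return_pmf w"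
| "run Ms t (Suc n) w = run Ms t n w \<bind> round_step (Ms (t + n + 1))"

end

theory Submission
  imports Defs
begin

text \<open>A token moves only when its node is matched, and then it ends up at either endpoint
of the matched edge with probability 1/2: a uniformly random k-subset of the n tokens on
the edge contains it with probability k/n, and the two equally likely sizes
\<lceil>n/2\<rceil> and \<lfloor>n/2\<rfloor> add up to n.  So the position of a single token
after one round is distributed according to the row of its node in the matching matrix,
whatever the positions of the other tokens are.  Conditioning on the positions after the
earlier rounds turns the rounds into a Markov chain for that token, whose multi-step
transition probabilities are the entries of the product of the matching matrices.\<close>

lemma card_subsets_containing:
  assumes "finite T" "i \<in> T" "0 < k"
  shows "card {S. S \<subseteq> T \<and> card S = k \<and> i \<in> S} = (card T - 1) choose (k - 1)"
proof -
  have eq: "{S. S \<subseteq> T \<and> card S = k \<and> i \<in> S}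
      = insert i ` {S. S \<subseteq> T - {i} \<and> card S = k - 1}"
  proof (intro set_eqI iffI)
    fix S assume S: "S \<in> {S. S \<subseteq> T \<and> card S = k \<and> i \<in> S}"
    hence "S = insert i (S - {i})" by auto
    moreover have "S - {i} \<in> {S. S \<subseteq> T - {i} \<and> card S = k - 1}"
      using S assms finite_subset[of S T] by auto
    ultimately show "S \<in> insert i ` {S. S \<subseteq> T - {i} \<and> card S = k - 1}" by blast
  next
    fix S assume "S \<in> insert i ` {S. S \<subseteq> T - {i} \<and> card S = k - 1}"
    then obtain R where R: "R \<subseteq> T - {i}" "card R = k - 1" "S = insert i R" by auto
    have "finite R" using R(1) assms(1) finite_subset by blast
    hence "card S = k" using R assms(3) by (auto simp: card_insert_if)
    thus "S \<in> {S. S \<subseteq> T \<and> card S = k \<and> i \<in> S}" using R assms by auto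
  qed
  have "inj_on (insert i) {S. S \<subseteq> T - {i} \<and> card S = k - 1}"
    by (rule inj_onI) (metis Diff_insert_absorb mem_Collect_eq subset_Diff_insert)
  then show ?thesis
    unfolding eq card_image[OF \<open>inj_on _ _\<close>]
    using n_subsets[of "T - {i}" "k - 1"] assms by simp
qed

lemma prob_uniform_subset_contains:
  assumes "finite T" "i \<in> T" "k \<le> card T"
  shows "measure_pmf.prob (pmf_of_set {S. S \<subseteq> T \<and> card S = k}) {S. i \<in> S}
       = real k / real (card T)"
proof -
  let ?A = "{S. S \<subseteq> T \<and> card S = k}"
  have card_A: "card ?A = card T choose k" using n_subsets[OF assms(1)] by simp
  have pos: "card T choose k > 0" using assms(3) by simp
  have fin: "finite ?A" using assms(1) by simp
  have ne: "?A \<noteq> {}" using card_A pos by (metis card.empty less_numeral_extra(3))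
  have prob: "measure_pmf.prob (pmf_of_set ?A) {S. i \<in> S}
      = card (?A \<inter> {S. i \<in> S}) / (card T choose k)"
    using measure_pmf_of_set[OF ne fin] card_A by simp
  show ?thesis
  proof (cases "k = 0")
    case True
    hence "?A \<inter> {S. i \<in> S} = {}" using assms(1) by (auto dest: finite_subset)
    thus ?thesis using prob True by simp
  next
    case False
    have "?A \<inter> {S. i \<in> S} = {S. S \<subseteq> T \<and> card S = k \<and> i \<in> S}" by auto
    then have "card (?A \<inter> {S. i \<in> S}) = (card T - 1) choose (k - 1)"
      using card_subsets_containing[OF assms(1,2)] False by simp
    then have "measure_pmf.prob (pmf_of_set ?A) {S. i \<in> S}
        = real ((card T - 1) choose (k - 1)) / real (card T choose k)"
      using prob by simp
    also have "\<dots> = real k / real (card T)"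
    proof -
      have "k * (card T choose k) = card T * ((card T - 1) choose (k - 1))"
        using times_binomial_minus1_eq False by simp
      then have "real k * real (card T choose k)
          = real (card T) * real ((card T - 1) choose (k - 1))"
        by (metis of_nat_mult)
      moreover have "card T > 0" using assms(1,2) by (auto simp: card_gt_0_iff)
      ultimately show ?thesis using pos by (simp add: field_simps)
    qed
    finally show ?thesis .
  qed
qed

lemma measure_bind_pmf:
  "measure_pmf.prob (bind_pmf M f) X = (\<integral>x. measure_pmf.prob (f x) X \<partial>measure_pmf M)"
  unfolding measure_pmf_bind
  by (rule measure_pmf.measure_bind[where N="count_space UNIV"])
    (auto simp: space_subprob_algebra measure_pmf_in_subprob_space
      prob_space_imp_subprob_space measure_pmf.prob_space_axioms)

lemma prob_edge_draw_contains:
  fixes w :: "'b::finite \<Rightarrow> 'n"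
  assumes "w i = fst e \<or> w i = snd e"
  shows "measure_pmf.prob (edge_draw w e) {S. i \<in> S} = 1/2"
proof -
  define T where "T = {j. w j = fst e \<or> w j = snd e}"
  define n where "n = card T"
  have "i \<in> T" using assms T_def by simp
  then have n_pos: "n > 0" unfolding n_def by (auto simp: card_gt_0_iff)
  let ?P = "\<lambda>k. measure_pmf.prob (pmf_of_set {S. S \<subseteq> T \<and> card S = k}) {S. i \<in> S}"
  have "measure_pmf.prob (edge_draw w e) {S. i \<in> S}
      = (\<integral>up. ?P (if up then (n + 1) div 2 else n div 2) \<partial>measure_pmf (bernoulli_pmf (1/2)))"
    unfolding edge_draw_def Let_def T_def[symmetric] n_def[symmetric] by (rule measure_bind_pmf)
  also have "\<dots> = ?P ((n + 1) div 2) / 2 + ?P (n div 2) / 2"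
    by (subst integral_bernoulli_pmf) simp_all
  also have "\<dots> = real ((n + 1) div 2 + n div 2) / real n / 2"
  proof -
    have "(n + 1) div 2 \<le> card T" "n div 2 \<le> card T"
      using n_pos unfolding n_def by presburger+
    then show ?thesis
      using prob_uniform_subset_contains[OF _ \<open>i \<in> T\<close>] by (simp add: n_def add_divide_distrib)
  qed
  also have "(n + 1) div 2 + n div 2 = n" by presburger
  finally show ?thesis using n_pos by simp
qed

lemma prob_if_member_eq:
  assumes "a \<noteq> b" and half: "measure_pmf.prob p {S. i \<in> S} = 1/2"
  shows "measure_pmf.prob p {S. (if i \<in> S then a else b) = v}
       = (if v = a \<or> v = b then 1/2 else 0)"
proof -
  consider "v = a" | "v = b" | "v \<noteq> a" "v \<noteq> b" by blast
  then show ?thesis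
  proof cases
    case 1
    then have "{S. (if i \<in> S then a else b) = v} = {S. i \<in> S}" using \<open>a \<noteq> b\<close> by auto
    then show ?thesis using half 1 by simp
  next
    case 2
    then have "{S. (if i \<in> S then a else b) = v} = UNIV - {S. i \<in> S}"
      using \<open>a \<noteq> b\<close> by auto
    then show ?thesis using measure_pmf.prob_compl[of "{S. i \<in> S}" p] half 2 by simp
  next
    case 3
    then have "{S. (if i \<in> S then a else b) = v} = {}" by auto
    then show ?thesis using 3 by simp
  qed
qed

lemma matching_edge_unique:
  assumes "is_matching E M" "e \<in> M" "e' \<in> M"
    and "u = fst e \<or> u = snd e" "u = fst e' \<or> u = snd e'"
  shows "e = e'"
  using assms unfolding is_matching_def by blast

lemma matching_edge_endpoints_distinct:
  assumes "is_matching E M" "e \<in> M"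
  shows "fst e \<noteq> snd e"
  using assms unfolding is_matching_def by auto

lemma matching_matrix_unmatched:
  assumes "\<not> matched M u"
  shows "matching_matrix M $ u $ v = (if v = u then 1 else 0)"
  using assms unfolding matching_matrix_def matched_def by force

lemma matching_matrix_matched:
  assumes M: "is_matching E M" and e: "e \<in> M" "u = fst e \<or> u = snd e"
  shows "matching_matrix M $ u $ v = (if v = fst e \<or> v = snd e then 1/2 else 0)"
proof -
  have ne: "fst e \<noteq> snd e" using matching_edge_endpoints_distinct[OF M e(1)] .
  have "(u, v) \<in> M \<Longrightarrow> (u, v) = e" "(v, u) \<in> M \<Longrightarrow> (v, u) = e"
    using matching_edge_unique[OF M _ e(1) _ e(2)] by auto
  then have partner: "(u, v) \<in> M \<or> (v, u) \<in> M \<longleftrightarrow> (v = fst e \<or> v = snd e) \<and> v \<noteq> u"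
    using e ne by (cases e) auto
  have "matched M u" using e unfolding matched_def by blast
  then show ?thesis
    using partner e(2) unfolding matching_matrix_def by auto
qed

lemma relocate_unmatched:
  "\<not> matched M (w i) \<Longrightarrow> relocate M w f i = w i"
  by (simp add: relocate_def)

lemma relocate_matched:
  assumes M: "is_matching E M" and e: "e \<in> M" "w i = fst e \<or> w i = snd e"
  shows "relocate M w f i = (if i \<in> f e then fst e else snd e)"
proof -
  have "(THE e. e \<in> M \<and> (w i = fst e \<or> w i = snd e)) = e"
    using e matching_edge_unique[OF M] by (intro the_equality) blast+
  moreover have "matched M (w i)" using e unfolding matched_def by blast
  ultimately show ?thesis by (simp add: relocate_def Let_def)
qed

lemma prob_round_step_position:
  fixes w :: "'b::finite \<Rightarrow> 'n::finite"
  assumes M: "is_matching E M"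
  shows "measure_pmf.prob (round_step M w) {w'. w' i = v} = matching_matrix M $ w i $ v"
proof (cases "matched M (w i)")
  case False
  then show ?thesis
    unfolding round_step_def measure_map_pmf
    by (simp add: vimage_def relocate_unmatched matching_matrix_unmatched eq_commute)
next
  case True
  then obtain e where e: "e \<in> M" "w i = fst e \<or> w i = snd e" unfolding matched_def by blast
  \<comment> \<open>the token's new position depends only on the draw on its own edge, a marginal of the product\<close>
  have "measure_pmf.prob (round_step M w) {w'. w' i = v}
      = measure_pmf.prob (map_pmf (\<lambda>f. f e) (Pi_pmf M {} (edge_draw w)))
          {S. (if i \<in> S then fst e else snd e) = v}"
    unfolding round_step_def measure_map_pmf
    by (simp add: vimage_def relocate_matched[where w = w and i = i, OF M e])
  also have "\<dots> = measure_pmf.prob (edge_draw w e) {S. (if i \<in> S then fst e else snd e) = v}"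
    using Pi_pmf_component[of M e "{}" "edge_draw w"] e(1) by simp
  also have "\<dots> = (if v = fst e \<or> v = snd e then 1/2 else 0)"
    by (rule prob_if_member_eq[OF matching_edge_endpoints_distinct[OF M e(1)]
          prob_edge_draw_contains[where w = w and i = i, OF e(2)]])
  also have "\<dots> = matching_matrix M $ w i $ v"
    using matching_matrix_matched[OF M e] by simp
  finally show ?thesis .
qed

lemma prob_run_position:
  fixes w0 :: "'b::finite \<Rightarrow> 'n::finite"
  assumes M: "\<And>t. t \<ge> 1 \<Longrightarrow> is_matching E (Ms t)"
  shows "measure_pmf.prob (run Ms t n w0) {w. w i = v} = mseq Ms (t + 1) n $ w0 i $ v"
proof (induction n arbitrary: v)
  case 0
  show ?case by (simp add: mat_def)
next
  case (Suc n)
  let ?A = "matching_matrix (Ms (t + n + 1))"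
  let ?pos = "map_pmf (\<lambda>w. w i) (run Ms t n w0)"
  have "is_matching E (Ms (t + n + 1))" using M by simp
  then have "measure_pmf.prob (run Ms t (Suc n) w0) {w. w i = v}
      = (\<integral>w. ?A $ w i $ v \<partial>measure_pmf (run Ms t n w0))"
    by (simp add: measure_bind_pmf prob_round_step_position)
  also have "\<dots> = (\<integral>x. ?A $ x $ v \<partial>measure_pmf ?pos)"
    by simp
  also have "\<dots> = (\<Sum>x\<in>UNIV. pmf ?pos x *\<^sub>R ?A $ x $ v)"
    by (rule integral_measure_pmf[of UNIV]) auto
  also have "\<dots> = (\<Sum>x\<in>UNIV. mseq Ms (t + 1) n $ w0 i $ x * ?A $ x $ v)"
    by (intro sum.cong refl) (simp add: pmf_map vimage_def Suc.IH)
  also have "\<dots> = mseq Ms (t + 1) (Suc n) $ w0 i $ v"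
    by (simp add: matrix_matrix_mult_def add.commute add.left_commute)
  finally show ?case .
qed

lemma prob_component_in:
  fixes p :: "('b \<Rightarrow> 'n::finite) pmf"
  shows "measure_pmf.prob p {w. w i \<in> D} = (\<Sum>v\<in>D. measure_pmf.prob p {w. w i = v})"
proof -
  have "measure_pmf.prob p {w. w i \<in> D} = measure_pmf.prob (map_pmf (\<lambda>w. w i) p) D"
    by (simp add: vimage_def)
  also have "\<dots> = (\<Sum>v\<in>D. pmf (map_pmf (\<lambda>w. w i) p) v)"
    by (rule measure_measure_pmf_finite) simp
  finally show ?thesis by (simp add: pmf_map vimage_def)
qed

theorem lemma3p1:
  fixes E :: "'n::finite set set"
    and Ms :: "nat \<Rightarrow> ('n \<times> 'n) set"
    and w0 :: "'b::finite \<Rightarrow> 'n"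
    and i :: 'b
    and t1 t2 :: nat
  assumes "simple_graph E"
    and "\<And>t. t \<ge> 1 \<Longrightarrow> is_matching E (Ms t)"
    and "t1 \<le> t2"
  shows "(\<forall>v. measure_pmf.prob (run Ms t1 (t2 - t1) w0) {w. w i = v}
                = Mint Ms (t1 + 1) t2 $ w0 i $ v)
       \<and> (\<forall>D. measure_pmf.prob (run Ms t1 (t2 - t1) w0) {w. w i \<in> D}
                = Mset (Mint Ms (t1 + 1) t2) (w0 i) D)"
proof -
  have "Mint Ms (t1 + 1) t2 = mseq Ms (t1 + 1) (t2 - t1)"
    unfolding Mint_def by simp
  then have node: "measure_pmf.prob (run Ms t1 (t2 - t1) w0) {w. w i = v}
      = Mint Ms (t1 + 1) t2 $ w0 i $ v" for v
    using prob_run_position[of E Ms] assms(2) by simp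
  show ?thesis
    using node by (simp add: prob_component_in Mset_def)
qed

end
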